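(* Any Radon measure $\mu$ of finite mass on a Noetherian Priestley space $(X,\tau,\le)$ is atomic: there is a countable set $F\subset X$ such that $\mu=\sum_{x\in F}\mu(\{x\})\delta_x$ with $\sum_{x\in F}\mu(\{x\})<\infty$.
   Context: A Priestley space is a partially ordered set $(X,\le)$ with a quasi-compact topology $\tau$ such that whenever $y\not\le x$ there is a clopen down-set $U$ (i.e. $z\in U$, $w\le z$ implies $w\in U$) with $x\in U$, $y\notin U$; it is compact Hausdorff. It is Noetherian if the topology $\tau^u$ consisting of all open up-sets is a Noetherian topology, equivalently every decreasing sequence of closed down-sets is eventually stationary. A Radon measure is a positive Borel measure that is inner regular with respect to compact sets. *)

theory Defs
  imports "HOL-Analysis.Analysis"
begin

definition borel_of :: "'a topology \<Rightarrow> 'a measure" where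
  "borel_of X = sigma (topspace X) {U. openin X U}"

definition down_set_in :: "'a topology \<Rightarrow> ('a \<Rightarrow> 'a \<Rightarrow> bool) \<Rightarrow> 'a set \<Rightarrow> bool" where
  "down_set_in X le U \<longleftrightarrow> U \<subseteq> topspace X \<and>
     (\<forall>z\<in>U. \<forall>w\<in>topspace X. le w z \<longrightarrow> w \<in> U)"

definition up_set_in :: "'a topology \<Rightarrow> ('a \<Rightarrow> 'a \<Rightarrow> bool) \<Rightarrow> 'a set \<Rightarrow> bool" where
  "up_set_in X le U \<longleftrightarrow> U \<subseteq> topspace X \<and>
     (\<forall>z\<in>U. \<forall>w\<in>topspace X. le z w \<longrightarrow> w \<in> U)"

definition priestley_space :: "'a topology \<Rightarrow> ('a \<Rightarrow> 'a \<Rightarrow> bool) \<Rightarrow> bool" where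
  "priestley_space X le \<longleftrightarrow>
     (\<forall>x\<in>topspace X. le x x) \<and>
     (\<forall>x\<in>topspace X. \<forall>y\<in>topspace X. le x y \<and> le y x \<longrightarrow> x = y) \<and>
     (\<forall>x\<in>topspace X. \<forall>y\<in>topspace X. \<forall>z\<in>topspace X. le x y \<and> le y z \<longrightarrow> le x z) \<and>
     compact_space X \<and>
     (\<forall>x\<in>topspace X. \<forall>y\<in>topspace X. \<not> le y x \<longrightarrow>
        (\<exists>U. openin X U \<and> closedin X U \<and> down_set_in X le U \<and> x \<in> U \<and> y \<notin> U))"

definition upper_topology :: "'a topology \<Rightarrow> ('a \<Rightarrow> 'a \<Rightarrow> bool) \<Rightarrow> 'a topology" where
  "upper_topology X le = topology (\<lambda>U. openin X U \<and> up_set_in X le U)"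

definition noetherian_topology :: "'a topology \<Rightarrow> bool" where
  "noetherian_topology T \<longleftrightarrow>
     (\<forall>U :: nat \<Rightarrow> 'a set. (\<forall>n. openin T (U n)) \<and> incseq U \<longrightarrow> (\<exists>N. \<forall>n\<ge>N. U n = U N))"

definition noetherian_priestley_space :: "'a topology \<Rightarrow> ('a \<Rightarrow> 'a \<Rightarrow> bool) \<Rightarrow> bool" where
  "noetherian_priestley_space X le \<longleftrightarrow>
     priestley_space X le \<and> noetherian_topology (upper_topology X le)"

definition radon_measure :: "'a topology \<Rightarrow> 'a measure \<Rightarrow> bool" where
  "radon_measure X M \<longleftrightarrow>
     sets M = sets (borel_of X) \<and>
     (\<forall>B\<in>sets M. emeasure M B = (SUP K\<in>{K. compactin X K \<and> K \<subseteq> B}. emeasure M K))"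

end

theory Submission
  imports Defs
begin

text \<open>
  The countably many atoms F of \<open>\<mu>\<close> carry all of its mass once one knows that a Borel set S
  without atoms is null. If \<open>\<mu>(S) > 0\<close>, the Noetherian property provides an open up-set U
  that is maximal with \<open>\<mu>(S - U) > 0\<close>. The closed set \<open>D = X - U\<close> has a maximal element m
  by compactness, and for a compact \<open>K \<subseteq> D - {m}\<close> the Priestley axiom yields an open
  up-set \<open>V \<ni> m\<close> missing K. Maximality of U makes \<open>S - (U \<union> V)\<close> null, hence K \<inter> S is null;
  by inner regularity \<open>(D \<inter> S) - {m}\<close> is null, and so is \<open>D \<inter> S\<close> because m is no atom of S.
\<close>

lemma openin_upper_topology:
  "openin (upper_topology X le) U \<longleftrightarrow> openin X U \<and> up_set_in X le U"
proof -
  have "istopology (\<lambda>U. openin X U \<and> up_set_in X le U)"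
    unfolding istopology_def up_set_in_def by (auto simp: openin_Int openin_Union) (metis)
  then show ?thesis
    unfolding upper_topology_def by simp
qed

lemma noetherian_topology_has_maximal:
  assumes N: "noetherian_topology T" and "P U\<^sub>0" and open_P: "\<And>U. P U \<Longrightarrow> openin T U"
  shows "\<exists>U. P U \<and> (\<forall>V. P V \<longrightarrow> U \<subseteq> V \<longrightarrow> V = U)"
proof -
  let ?R = "{(V, U). P U \<and> P V \<and> U \<subset> V}"
  have "wf ?R"
    unfolding wf_iff_no_infinite_down_chain
  proof
    assume "\<exists>f. \<forall>i. (f (Suc i), f i) \<in> ?R"
    then obtain f where f: "\<forall>i. (f (Suc i), f i) \<in> ?R"
      by blast
    then have P_f: "P (f i)" and f_strict: "f i \<subset> f (Suc i)" for i
      by simp_all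
    have "incseq f"
      using f_strict by (intro incseq_SucI less_imp_le)
    moreover have "\<forall>i. openin T (f i)"
      using open_P P_f by blast
    ultimately have "\<exists>n. \<forall>i\<ge>n. f i = f n"
      using N[unfolded noetherian_topology_def, rule_format, of f] by simp
    then obtain n where "\<forall>i\<ge>n. f i = f n" ..
    then have "f (Suc n) = f n"
      using le_SucI[OF order_refl] by blast
    with f_strict[of n] show False
      by simp
  qed
  then obtain U where "P U" and U_max: "\<And>V. P V \<Longrightarrow> \<not> U \<subset> V"
    using \<open>P U\<^sub>0\<close> by (rule wfE_min[OF _ CollectI]) auto
  then show ?thesis
    by (metis psubsetI)
qed

lemma priestley_separation:
  assumes "priestley_space X le" "x \<in> topspace X" "y \<in> topspace X" "\<not> le y x"
  obtains U where "openin X U" "closedin X U" "down_set_in X le U" "x \<in> U" "y \<notin> U"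
  using assms unfolding priestley_space_def by blast

lemma priestley_imp_Hausdorff_space:
  assumes P: "priestley_space X le"
  shows "Hausdorff_space X"
proof -
  have separate: "\<exists>U V. openin X U \<and> openin X V \<and> x \<in> U \<and> y \<in> V \<and> disjnt U V"
    if xy: "x \<in> topspace X" "y \<in> topspace X" "\<not> le y x" for x y
  proof -
    obtain U where "openin X U" "closedin X U" "x \<in> U" "y \<notin> U"
      using priestley_separation[OF P xy] by blast
    then show ?thesis
      using xy by (intro exI[of _ U] exI[of _ "topspace X - U"]) (auto simp: disjnt_def)
  qed
  have "\<not> le y x \<or> \<not> le x y" if "x \<in> topspace X" "y \<in> topspace X" "x \<noteq> y" for x y
    using P that unfolding priestley_space_def by blast
  then show ?thesis
    unfolding Hausdorff_space_def by (metis separate disjnt_sym)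
qed

lemma closedin_priestley_principal_upset:
  assumes P: "priestley_space X le" and m: "m \<in> topspace X"
  shows "closedin X {y \<in> topspace X. le m y}"
proof -
  let ?\<U> = "{U. openin X U \<and> down_set_in X le U \<and> m \<notin> U}"
  have "topspace X - {y \<in> topspace X. le m y} \<subseteq> \<Union>?\<U>"
  proof
    fix y assume "y \<in> topspace X - {y \<in> topspace X. le m y}"
    then obtain U where "openin X U" "down_set_in X le U" "y \<in> U" "m \<notin> U"
      using priestley_separation[OF P _ m] by blast
    then show "y \<in> \<Union>?\<U>"
      by blast
  qed
  moreover have "\<Union>?\<U> \<subseteq> topspace X - {y \<in> topspace X. le m y}"
    using m unfolding down_set_in_def by blast
  ultimately have "{y \<in> topspace X. le m y} = topspace X - \<Union>?\<U>"
    by blast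
  then show ?thesis
    by (auto intro: openin_Union)
qed

lemma priestley_separate_point_compactin:
  assumes P: "priestley_space X le" and m: "m \<in> topspace X" and C: "compactin X C"
    and not_above: "\<And>y. y \<in> C \<Longrightarrow> \<not> le m y"
  obtains V where "openin X V" "up_set_in X le V" "m \<in> V" "V \<inter> C = {}"
proof -
  let ?\<U> = "{U. openin X U \<and> closedin X U \<and> down_set_in X le U \<and> m \<notin> U}"
  have "C \<subseteq> \<Union>?\<U>"
  proof
    fix y assume "y \<in> C"
    then obtain U where "openin X U" "closedin X U" "down_set_in X le U" "y \<in> U" "m \<notin> U"
      using priestley_separation[OF P _ m not_above] compactin_subset_topspace[OF C] by blast
    then show "y \<in> \<Union>?\<U>"
      by blast
  qed
  then obtain \<F> where \<F>: "finite \<F>" "\<F> \<subseteq> ?\<U>" "C \<subseteq> \<Union>\<F>"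
    using C unfolding compactin_def by (metis (no_types, lifting) mem_Collect_eq)
  define V where "V = topspace X - \<Union>\<F>"
  show ?thesis
  proof
    show "openin X V"
      unfolding V_def using \<F> by (intro openin_diff openin_topspace closedin_Union) auto
    show "up_set_in X le V"
      using \<F>(2) unfolding V_def up_set_in_def down_set_in_def by blast
    show "m \<in> V" "V \<inter> C = {}"
      using m \<F> unfolding V_def by auto
  qed
qed

lemma compact_space_chain_Inter_nonempty:
  assumes "compact_space X" and closed: "\<And>T. T \<in> \<S> \<Longrightarrow> closedin X T"
    and nonempty: "\<And>T. T \<in> \<S> \<Longrightarrow> T \<noteq> {}" and chain: "subset.chain UNIV \<S>"
  shows "\<Inter>\<S> \<noteq> {}"
proof -
  have "\<forall>\<F>. finite \<F> \<and> \<F> \<subseteq> \<S> \<longrightarrow> \<Inter>\<F> \<noteq> {}"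
  proof (intro allI impI)
    fix \<F> assume \<F>: "finite \<F> \<and> \<F> \<subseteq> \<S>"
    show "\<Inter>\<F> \<noteq> {}"
    proof (cases "\<F> = {}")
      case False
      have "subset.chain UNIV \<F>"
        using chain \<F> unfolding subset_chain_def by blast
      then have "\<Inter>\<F> \<in> \<F>"
        using Inter_in_chain \<F> False by blast
      then show ?thesis
        using nonempty \<F> by blast
    qed simp
  qed
  with \<open>compact_space X\<close> closed show ?thesis
    by (simp add: compact_space_fip)
qed

lemma priestley_closedin_has_maximal:
  assumes P: "priestley_space X le" and D: "closedin X D" "D \<noteq> {}"
  shows "\<exists>m\<in>D. \<forall>d\<in>D. le m d \<longrightarrow> d = m"
proof (rule predicate_Zorn)
  have D_sub: "D \<subseteq> topspace X"
    using D closedin_subset by blast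
  have D_refl: "\<And>x. x \<in> D \<Longrightarrow> le x x"
    and D_trans: "\<And>x y z. x \<in> D \<Longrightarrow> y \<in> D \<Longrightarrow> z \<in> D \<Longrightarrow> le x y \<Longrightarrow> le y z \<Longrightarrow> le x z"
    and "\<And>x y. x \<in> D \<Longrightarrow> y \<in> D \<Longrightarrow> le x y \<Longrightarrow> le y x \<Longrightarrow> x = y"
    using P D_sub unfolding priestley_space_def by (meson subsetD)+
  then show "partial_order_on D (relation_of le D)"
    by (rule partial_order_on_relation_ofI)
  fix C assume C: "C \<in> Chains (relation_of le D)"
  then have "C \<subseteq> D"
    by (rule Chains_relation_of)
  \<comment> \<open>Inserting D keeps the intersection inside D, also when the chain C is empty.\<close>
  define \<S> where "\<S> = insert D ((\<lambda>c. {y \<in> D. le c y}) ` C)"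
  have comparable: "le c c' \<or> le c' c" if "c \<in> C" "c' \<in> C" for c c'
    using C that unfolding Chains_def relation_of_def by auto
  have up_antimono: "{y \<in> D. le c' y} \<subseteq> {y \<in> D. le c y}" if "c \<in> C" "c' \<in> C" "le c c'" for c c'
    using D_trans \<open>C \<subseteq> D\<close> that by blast
  have "{y \<in> D. le c y} \<subseteq> {y \<in> D. le c' y} \<or> {y \<in> D. le c' y} \<subseteq> {y \<in> D. le c y}"
    if "c \<in> C" "c' \<in> C" for c c'
    using comparable[OF that] up_antimono that by blast
  then have chain: "subset.chain UNIV \<S>"
    unfolding subset_chain_def \<S>_def by blast
  have "closedin X {y \<in> D. le c y}" if "c \<in> C" for c
  proof -
    have "{y \<in> D. le c y} = D \<inter> {y \<in> topspace X. le c y}"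
      using D_sub by blast
    then show ?thesis
      using D(1) closedin_priestley_principal_upset[OF P] \<open>C \<subseteq> D\<close> D_sub that
      by (metis closedin_Int subsetD)
  qed
  then have closed: "\<forall>T\<in>\<S>. closedin X T"
    using D(1) unfolding \<S>_def by blast
  have "\<And>T. T \<in> \<S> \<Longrightarrow> T \<noteq> {}"
    using D(2) \<open>C \<subseteq> D\<close> D_refl unfolding \<S>_def by blast
  moreover have "compact_space X"
    using P unfolding priestley_space_def by blast
  ultimately have "\<Inter>\<S> \<noteq> {}"
    using closed chain by (intro compact_space_chain_Inter_nonempty) auto
  then obtain u where "u \<in> \<Inter>\<S>"
    by blast
  then show "\<exists>u\<in>D. \<forall>c\<in>C. le c u"
    unfolding \<S>_def by auto
qed

lemma emeasure_countable_eq_infsum: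
  assumes A: "countable A" and singletons: "\<And>x. x \<in> A \<Longrightarrow> {x} \<in> sets M"
  shows "emeasure M A = (\<Sum>\<^sub>\<infinity>x\<in>A. emeasure M {x})"
proof -
  have finite_subset: "emeasure M G = (\<Sum>x\<in>G. emeasure M {x})" if "finite G" "G \<subseteq> A" for G
    using that singletons by (intro emeasure_eq_sum_singleton) auto
  have "(\<Sum>\<^sub>\<infinity>x\<in>A. emeasure M {x}) = (SUP G\<in>{G. finite G \<and> G \<subseteq> A}. \<Sum>x\<in>G. emeasure M {x})"
    by (rule nonneg_infsum_complete) simp
  also have "\<dots> = (SUP G\<in>{G. finite G \<and> G \<subseteq> A}. emeasure M G)"
    using finite_subset by (intro SUP_cong) auto
  also have "\<dots> = emeasure M A"
  proof (rule antisym)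
    show "(SUP G\<in>{G. finite G \<and> G \<subseteq> A}. emeasure M G) \<le> emeasure M A"
      using sets.countable[OF singletons A] by (intro SUP_least emeasure_mono) auto
    show "emeasure M A \<le> (SUP G\<in>{G. finite G \<and> G \<subseteq> A}. emeasure M G)"
    proof (cases "A = {}")
      case False
      define G where "G n = from_nat_into A ` {..n}" for n
      have G: "finite (G n)" "G n \<subseteq> A" for n
        using from_nat_into[OF False] by (auto simp: G_def)
      have "A = (\<Union>n. G n)"
        using G range_from_nat_into[OF False A] by (auto simp: G_def) (metis atMost_iff image_eqI order_refl rangeE)
      moreover have "range G \<subseteq> sets M"
        using G singletons by (blast intro: sets.countable countable_finite)
      moreover have "incseq G"
        by (auto simp: G_def incseq_def)
      ultimately have "emeasure M A = (SUP n. emeasure M (G n))"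
        by (simp add: SUP_emeasure_incseq)
      also have "\<dots> \<le> (SUP G\<in>{G. finite G \<and> G \<subseteq> A}. emeasure M G)"
        using G by (intro SUP_mono) blast
      finally show ?thesis .
    qed simp
  qed
  finally show ?thesis ..
qed

lemma space_borel_of: "space (borel_of X) = topspace X"
  unfolding borel_of_def by (simp add: space_measure_of_conv)

lemma sets_borel_of: "sets (borel_of X) = sigma_sets (topspace X) {U. openin X U}"
  unfolding borel_of_def by (rule sets_measure_of) (auto dest: openin_subset)

lemma borel_of_open: "openin X U \<Longrightarrow> U \<in> sets (borel_of X)"
  by (simp add: sets_borel_of sigma_sets.Basic)

lemma borel_of_closed: "closedin X C \<Longrightarrow> C \<in> sets (borel_of X)"
  using borel_of_open[of X "topspace X - C"] sets.compl_sets[of "topspace X - C" "borel_of X"]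
  by (simp add: closedin_def space_borel_of double_diff)

lemma
  assumes "radon_measure X M"
  shows space_radon_measure: "space M = topspace X"
    and radon_measure_closed_sets: "closedin X C \<Longrightarrow> C \<in> sets M"
    and radon_measure_inner_regular:
      "B \<in> sets M \<Longrightarrow> emeasure M B = (SUP K\<in>{K. compactin X K \<and> K \<subseteq> B}. emeasure M K)"
  using assms unfolding radon_measure_def
  by (auto simp: space_borel_of borel_of_closed dest: sets_eq_imp_space_eq)

lemma radon_measure_null_if_compact_null:
  assumes R: "radon_measure X M" and B: "B \<in> sets M"
    and compact_null: "\<And>K. compactin X K \<Longrightarrow> K \<subseteq> B \<Longrightarrow> emeasure M K = 0"
  shows "B \<in> null_sets M"
proof -
  have "emeasure M B = (SUP K\<in>{K. compactin X K \<and> K \<subseteq> B}. emeasure M K)"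
    using B by (rule radon_measure_inner_regular[OF R])
  also have "\<dots> \<le> 0"
    using compact_null by (intro SUP_least) simp
  finally show ?thesis
    using B by (simp add: null_sets_def)
qed

lemma emeasure_eq_infsum_point_masses:
  assumes F: "countable F" and singletons: "\<And>x. x \<in> F \<Longrightarrow> {x} \<in> sets M"
    and null: "space M - F \<in> null_sets M" and B: "B \<in> sets M"
  shows "emeasure M B = (\<Sum>\<^sub>\<infinity>x\<in>F. emeasure M {x} * indicator B x)"
proof -
  have "F \<in> sets M"
    using sets.countable[OF singletons F] .
  then have "B \<inter> F \<in> sets M" "B - F \<in> null_sets M"
    using B sets.sets_into_space[OF B] by (auto intro: null_sets_subset[OF null])
  moreover have "B = (B \<inter> F) \<union> (B - F)"
    by blast
  ultimately have "emeasure M B = emeasure M (B \<inter> F)"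
    by (metis emeasure_Un_null_set)
  also have "\<dots> = (\<Sum>\<^sub>\<infinity>x\<in>B \<inter> F. emeasure M {x})"
    using F singletons by (intro emeasure_countable_eq_infsum) (auto intro: countable_subset)
  also have "\<dots> = (\<Sum>\<^sub>\<infinity>x\<in>F. emeasure M {x} * indicator B x)"
    by (rule infsum_cong_neutral) (auto simp: indicator_def)
  finally show ?thesis .
qed

lemma priestley_radon_singleton_sets:
  assumes "priestley_space X le" and "radon_measure X M" and "x \<in> topspace X"
  shows "{x} \<in> sets M"
  using assms by (metis closedin_Hausdorff_singleton priestley_imp_Hausdorff_space radon_measure_closed_sets)

lemma priestley_null_off_maximal_point:
  assumes P: "priestley_space X le" and R: "radon_measure X M" and S: "S \<in> sets M"
    and D: "closedin X D" and m: "m \<in> D" and m_max: "\<And>d. d \<in> D \<Longrightarrow> le m d \<Longrightarrow> d = m"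
    and upsets_null:
      "\<And>V. openin X V \<Longrightarrow> up_set_in X le V \<Longrightarrow> m \<in> V \<Longrightarrow> emeasure M ((D - V) \<inter> S) = 0"
  shows "D \<inter> S - {m} \<in> null_sets M"
proof (rule radon_measure_null_if_compact_null[OF R])
  have "m \<in> topspace X"
    using m D closedin_subset by blast
  then show "D \<inter> S - {m} \<in> sets M"
    using D S priestley_radon_singleton_sets[OF P R] by (auto intro: radon_measure_closed_sets[OF R])
  fix K assume K: "compactin X K" "K \<subseteq> D \<inter> S - {m}"
  obtain V where V: "openin X V" "up_set_in X le V" "m \<in> V" "V \<inter> K = {}"
    using priestley_separate_point_compactin[OF P \<open>m \<in> topspace X\<close> K(1)] m_max K(2) by blast
  have "K \<subseteq> (D - V) \<inter> S"
    using K(2) V(4) by blast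
  moreover have "(D - V) \<inter> S \<in> sets M"
    using D V(1) S by (intro sets.Int[OF radon_measure_closed_sets[OF R]] closedin_diff)
  ultimately show "emeasure M K = 0"
    using upsets_null[OF V(1-3)] by (metis emeasure_mono le_zero_eq)
qed

lemma noetherian_priestley_atomless_null:
  assumes NP: "noetherian_priestley_space X le" and R: "radon_measure X M"
    and S: "S \<in> sets M" and atomless: "\<And>x. x \<in> S \<Longrightarrow> emeasure M {x} = 0"
  shows "emeasure M S = 0"
proof (rule ccontr)
  assume S_pos: "emeasure M S \<noteq> 0"
  have P: "priestley_space X le" and N: "noetherian_topology (upper_topology X le)"
    using NP unfolding noetherian_priestley_space_def by auto
  define Q where "Q U \<longleftrightarrow> openin (upper_topology X le) U \<and> emeasure M ((topspace X - U) \<inter> S) \<noteq> 0" for U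
  have "S \<subseteq> topspace X"
    using sets.sets_into_space[OF S] by (simp add: space_radon_measure[OF R])
  then have "Q {}"
    using S_pos by (simp add: Q_def Int_absorb1)
  then obtain U where "Q U" and U_max: "\<And>V. Q V \<Longrightarrow> U \<subseteq> V \<Longrightarrow> V = U"
    using noetherian_topology_has_maximal[OF N, of Q] unfolding Q_def by blast
  then have U: "openin X U" "up_set_in X le U"
    by (simp_all add: Q_def openin_upper_topology)
  define D where "D = topspace X - U"
  have D: "closedin X D" "emeasure M (D \<inter> S) \<noteq> 0"
    using \<open>Q U\<close> U by (auto simp: D_def Q_def)
  then obtain m where "m \<in> D" and m_max: "\<And>d. d \<in> D \<Longrightarrow> le m d \<Longrightarrow> d = m"
    using priestley_closedin_has_maximal[OF P D(1)] by fastforce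
  have "emeasure M ((D - V) \<inter> S) = 0" if V: "openin X V" "up_set_in X le V" "m \<in> V" for V
  proof -
    have "openin (upper_topology X le) (U \<union> V)"
      using U V(1,2) by (metis openin_Un openin_upper_topology)
    moreover have "U \<union> V \<noteq> U"
      using \<open>m \<in> V\<close> \<open>m \<in> D\<close> unfolding D_def by blast
    ultimately have "\<not> Q (U \<union> V)"
      using U_max by blast
    moreover have "D - V = topspace X - (U \<union> V)"
      unfolding D_def by blast
    ultimately show ?thesis
      using \<open>openin (upper_topology X le) (U \<union> V)\<close> unfolding Q_def by simp
  qed
  then have "D \<inter> S - {m} \<in> null_sets M"
    using priestley_null_off_maximal_point[OF P R S D(1) \<open>m \<in> D\<close> m_max] by blast
  moreover have "{m} \<in> sets M"
    using \<open>m \<in> D\<close> priestley_radon_singleton_sets[OF P R] unfolding D_def by blast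
  then have "{m} \<inter> S \<in> null_sets M"
    using atomless by (cases "m \<in> S") (auto simp: null_sets_def)
  ultimately have "(D \<inter> S - {m}) \<union> ({m} \<inter> S) \<in> null_sets M"
    by (intro null_sets.Un)
  moreover have "(D \<inter> S - {m}) \<union> ({m} \<inter> S) = D \<inter> S"
    using \<open>m \<in> D\<close> by blast
  ultimately show False
    using D(2) by (simp add: null_sets_def)
qed

theorem theorem3p8:
  fixes X :: "'a topology" and le :: "'a \<Rightarrow> 'a \<Rightarrow> bool" and M :: "'a measure"
  assumes "noetherian_priestley_space X le"
    and "radon_measure X M"
    and "emeasure M (space M) < \<infinity>"
  shows "\<exists>F. countable F \<and> F \<subseteq> topspace X \<and>
           (\<Sum>\<^sub>\<infinity>x\<in>F. emeasure M {x}) < \<infinity> \<and>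
           (\<forall>B\<in>sets M. emeasure M B = (\<Sum>\<^sub>\<infinity>x\<in>F. emeasure M {x} * indicator B x))"
proof -
  interpret finite_measure M
    using assms(3) by (intro finite_measureI) simp
  define F where "F = {x. emeasure M {x} \<noteq> 0}"
  have "countable F"
    using countable_support by (simp add: F_def emeasure_eq_measure)
  have singletons: "{x} \<in> sets M" if "x \<in> F" for x
    using that emeasure_notin_sets unfolding F_def by blast
  then have "F \<subseteq> space M"
    by (auto dest: sets.sets_into_space)
  have "space M - F \<in> sets M"
    using sets.countable[OF singletons \<open>countable F\<close>] by blast
  then have "space M - F \<in> null_sets M"
    using noetherian_priestley_atomless_null[OF assms(1,2)] unfolding F_def by blast
  then have atomic: "emeasure M B = (\<Sum>\<^sub>\<infinity>x\<in>F. emeasure M {x} * indicator B x)" if "B \<in> sets M" for B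
    using emeasure_eq_infsum_point_masses[OF \<open>countable F\<close> singletons] that by blast
  have "(\<Sum>\<^sub>\<infinity>x\<in>F. emeasure M {x}) = emeasure M (space M)"
    using atomic[OF sets.top] \<open>F \<subseteq> space M\<close> by (simp add: indicator_def subset_iff cong: infsum_cong)
  then show ?thesis
    using \<open>countable F\<close> \<open>F \<subseteq> space M\<close> atomic assms(3)
    by (auto simp: space_radon_measure[OF assms(2)])
qed

end
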